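(* Let $\mathscr L$ and $\mathscr S$ be countable locally finite graphs with vertex sets $V_{\mathscr L}$, $V_{\mathscr S}$, and let $\pi:V_{\mathscr L}\to V_{\mathscr S}$ be surjective. Assume that there is a measurable way to assign to every infinite self-avoiding path $\gamma:\mathbb N\to V_{\mathscr S}$ an infinite self-avoiding path $\tilde\gamma:\{n_\gamma,n_\gamma+1,\dots\}\to V_{\mathscr L}$ (for some $n_\gamma\in\mathbb N$) such that $\pi(\tilde\gamma_m)=\gamma_m$ for every $m\ge n_\gamma$. For every $v\in V_{\mathscr S}$ let $p_v\in[0,1]$, and consider on $\mathscr S$ the random configuration where each vertex $v$ is retained independently with probability $p_v$. Let $\mathfrak X$ be a random subset of $V_{\mathscr L}$ such that the family $(\mathfrak X\cap\pi^{-1}(\{v\}))_{v\in V_{\mathscr S}}$ is independent and, for every $x\in V_{\mathscr L}$, $\mathbb P(x\in\mathfrak X)\ge p_{\pi(x)}$. Then the probability that there is an infinite path of retained vertices (elements of $\mathfrak X$) in $\mathscr L$ is at least the probability that there is an infinite path of retained vertices in $\mathscr S$.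
   Context: Graphs are simple and undirected; "countable" means finite or countably infinite; locally finite means each vertex has finitely many neighbours. A self-avoiding path visits no vertex twice. The space of infinite paths carries the topology of pointwise convergence (vertex sets discrete) and the associated Borel structure. An infinite path of retained vertices means an infinite self-avoiding path all of whose vertices are retained. *)

theory Defs
  imports "HOL-Probability.Probability"
begin

definition simple_lf_graph :: "('v \<Rightarrow> 'v \<Rightarrow> bool) \<Rightarrow> bool" where
  "simple_lf_graph E \<longleftrightarrow> (\<forall>x y. E x y \<longrightarrow> E y x) \<and> (\<forall>x. \<not> E x x) \<and> (\<forall>x. finite {y. E x y})"

definition inf_path_from :: "('v \<Rightarrow> 'v \<Rightarrow> bool) \<Rightarrow> nat \<Rightarrow> (nat \<Rightarrow> 'v) \<Rightarrow> bool" where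
  "inf_path_from E n g \<longleftrightarrow> inj_on g {n..} \<and> (\<forall>m\<ge>n. E (g m) (g (Suc m)))"

abbreviation inf_path :: "('v \<Rightarrow> 'v \<Rightarrow> bool) \<Rightarrow> (nat \<Rightarrow> 'v) \<Rightarrow> bool" where
  "inf_path E g \<equiv> inf_path_from E 0 g"

text \<open>Sequences of vertices with the product (= Borel of pointwise convergence,
vertex sets discrete and countable) sigma algebra.\<close>
definition seq_space :: "(nat \<Rightarrow> 'v) measure" where
  "seq_space = PiM UNIV (\<lambda>_. count_space UNIV)"

definition path_space :: "('v \<Rightarrow> 'v \<Rightarrow> bool) \<Rightarrow> (nat \<Rightarrow> 'v) measure" where
  "path_space E = restrict_space seq_space {g. inf_path E g}"

definition has_inf_retained_path :: "('v \<Rightarrow> 'v \<Rightarrow> bool) \<Rightarrow> ('v \<Rightarrow> bool) \<Rightarrow> bool" where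
  "has_inf_retained_path E R \<longleftrightarrow> (\<exists>g. inf_path E g \<and> (\<forall>m. R (g m)))"

definition site_perc :: "('v \<Rightarrow> real) \<Rightarrow> ('v \<Rightarrow> bool) measure" where
  "site_perc p = PiM UNIV (\<lambda>v. measure_pmf (bernoulli_pmf (p v)))"

end

theory Submission
  imports Defs
begin

(* Compare the two percolation events through prefixes of lifted paths. Since a lift meets
   every fibre of \<pi> at most once, the event that some prefix of a family of lifts is entirely
   retained has, in each single fibre, a section that is trivial or lies between a cylinder
   {a. a x} and the complement of the empty configuration. For a finite family both laws are
   products over finitely many fibres, and replacing the fibres of site percolation (retained
   entirely with probability p v, or not at all) one at a time by the fibres of X (each point
   retained with probability at least p v) can only increase the probability, by Fubini.
   Countable families follow by monotone convergence. An infinite retained path in S finally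
   gives, for some k, retained lifted prefixes of every length starting in a finite set of
   vertices of L, and Koenig's lemma in the locally finite graph L turns them into an infinite
   retained path. *)

lemma emeasure_le_if_incseq_cover:
  assumes C: "incseq C" "\<And>k. C k \<in> sets M"
    and cover: "A \<subseteq> (\<Union>k. C k)" and le: "\<And>k. emeasure M (C k) \<le> c"
  shows "emeasure M A \<le> c"
proof -
  have "emeasure M A \<le> emeasure M (\<Union>k. C k)"
    using C(2) cover by (intro emeasure_mono) auto
  also have "\<dots> = (SUP k. emeasure M (C k))"
    using C by (intro SUP_emeasure_incseq[symmetric]) auto
  also have "\<dots> \<le> c" using le by (rule SUP_least)
  finally show ?thesis .
qed

lemma emeasure_All_antimono:
  fixes P :: "nat \<Rightarrow> 'a \<Rightarrow> bool"
  assumes M: "finite_measure M"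
    and P: "\<And>N. Measurable.pred M (P N)" "\<And>N N' x. N \<le> N' \<Longrightarrow> P N' x \<Longrightarrow> P N x"
  shows "emeasure M {x\<in>space M. \<forall>N. P N x} = (INF N. emeasure M {x\<in>space M. P N x})"
proof -
  have "(INF N. emeasure M {x\<in>space M. P N x}) = emeasure M (\<Inter>N. {x\<in>space M. P N x})"
  proof (rule INF_emeasure_decseq')
    show "{x\<in>space M. P N x} \<in> sets M" for N using P(1) by (simp add: pred_def)
    show "decseq (\<lambda>N. {x\<in>space M. P N x})" using P(2) by (auto simp: decseq_def)
  qed (simp add: finite_measure.emeasure_finite[OF M])
  also have "(\<Inter>N. {x\<in>space M. P N x}) = {x\<in>space M. \<forall>N. P N x}" by auto
  finally show ?thesis by simp
qed

lemma emeasure_All_antimono_le: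
  fixes P :: "nat \<Rightarrow> 'a \<Rightarrow> bool" and Q :: "nat \<Rightarrow> 'b \<Rightarrow> bool"
  assumes S: "finite_measure S" and M: "finite_measure M"
    and P: "\<And>N. Measurable.pred S (P N)" "\<And>N N' x. N \<le> N' \<Longrightarrow> P N' x \<Longrightarrow> P N x"
    and Q: "\<And>N. Measurable.pred M (Q N)" "\<And>N N' x. N \<le> N' \<Longrightarrow> Q N' x \<Longrightarrow> Q N x"
    and le: "\<And>N. emeasure S {x\<in>space S. P N x} \<le> emeasure M {x\<in>space M. Q N x}"
  shows "emeasure S {x\<in>space S. \<forall>N. P N x} \<le> emeasure M {x\<in>space M. \<forall>N. Q N x}"
proof -
  have "emeasure S {x\<in>space S. \<forall>N. P N x} = (INF N. emeasure S {x\<in>space S. P N x})"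
    by (rule emeasure_All_antimono[OF S P])
  also have "\<dots> \<le> (INF N. emeasure M {x\<in>space M. Q N x})"
    using le by (rule INF_mono')
  also have "\<dots> = emeasure M {x\<in>space M. \<forall>N. Q N x}"
    by (rule emeasure_All_antimono[OF M Q, symmetric])
  finally show ?thesis .
qed

lemma emeasure_PiM_insert_eq_nn_integral_sections:
  fixes \<kappa> :: "'i \<Rightarrow> 'x measure"
  assumes I: "finite I" "i \<notin> I"
    and \<kappa>: "\<And>j. prob_space (\<kappa> j)" and \<rho>: "prob_space \<rho>"
    and A: "A \<in> sets (PiM (insert i I) (\<kappa>(i := \<rho>)))"
  shows "emeasure (PiM (insert i I) (\<kappa>(i := \<rho>))) A
       = (\<integral>\<^sup>+ x. emeasure \<rho> {y\<in>space \<rho>. x(i := y) \<in> A} \<partial>PiM I \<kappa>)"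
proof -
  interpret product_prob_space "\<kappa>(i := \<rho>)"
    using \<kappa> \<rho> by (simp add: product_prob_space_def product_prob_space_axioms_def
        product_sigma_finite_def prob_space_imp_sigma_finite)
  have PiM_I: "PiM I (\<kappa>(i := \<rho>)) = PiM I \<kappa>"
    using I(2) by (intro PiM_cong) auto
  have section_integral: "(\<integral>\<^sup>+ y. indicator A (x(i := y)) \<partial>\<rho>) = emeasure \<rho> {y\<in>space \<rho>. x(i := y) \<in> A}"
    if x: "x \<in> space (PiM I \<kappa>)" for x
  proof -
    have upd: "(\<lambda>y. x(i := y)) \<in> measurable \<rho> (PiM (insert i I) (\<kappa>(i := \<rho>)))"
      using measurable_component_update[of x I "\<kappa>(i := \<rho>)" i] x I(2) PiM_I by simp
    have "{y\<in>space \<rho>. x(i := y) \<in> A} = (\<lambda>y. x(i := y)) -` A \<inter> space \<rho>" by auto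
    also have "\<dots> \<in> sets \<rho>" using measurable_sets[OF upd A] .
    finally have "emeasure \<rho> {y\<in>space \<rho>. x(i := y) \<in> A} = (\<integral>\<^sup>+ y. indicator {y\<in>space \<rho>. x(i := y) \<in> A} y \<partial>\<rho>)"
      by simp
    then show ?thesis by (auto intro!: nn_integral_cong split: split_indicator)
  qed
  have "emeasure (PiM (insert i I) (\<kappa>(i := \<rho>))) A = (\<integral>\<^sup>+ x. indicator A x \<partial>PiM (insert i I) (\<kappa>(i := \<rho>)))"
    using A by simp
  also have "\<dots> = (\<integral>\<^sup>+ x. (\<integral>\<^sup>+ y. indicator A (x(i := y)) \<partial>\<rho>) \<partial>PiM I \<kappa>)"
    using product_nn_integral_insert[OF I borel_measurable_indicator[OF A]] by (simp add: PiM_I)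
  also have "\<dots> = (\<integral>\<^sup>+ x. emeasure \<rho> {y\<in>space \<rho>. x(i := y) \<in> A} \<partial>PiM I \<kappa>)"
    by (intro nn_integral_cong section_integral)
  finally show ?thesis .
qed

lemma emeasure_PiM_fun_upd_mono:
  fixes \<kappa> :: "'i \<Rightarrow> 'x measure"
  assumes I: "finite I" "i \<notin> I"
    and \<kappa>: "\<And>j. prob_space (\<kappa> j)" and \<mu>: "prob_space \<mu>" and \<nu>: "prob_space \<nu>"
    and sets_eq: "sets \<nu> = sets \<mu>"
    and A: "A \<in> sets (PiM (insert i I) (\<kappa>(i := \<mu>)))"
    and sections: "\<And>x. x \<in> space (PiM I \<kappa>) \<Longrightarrow>
      emeasure \<nu> {y\<in>space \<nu>. x(i := y) \<in> A} \<le> emeasure \<mu> {y\<in>space \<mu>. x(i := y) \<in> A}"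
  shows "emeasure (PiM (insert i I) (\<kappa>(i := \<nu>))) A \<le> emeasure (PiM (insert i I) (\<kappa>(i := \<mu>))) A"
proof -
  have "A \<in> sets (PiM (insert i I) (\<kappa>(i := \<nu>)))"
    using A sets_eq by (subst sets_PiM_cong[OF refl, of _ "\<kappa>(i := \<nu>)" "\<kappa>(i := \<mu>)"]) auto
  then show ?thesis
    using sections
    by (simp add: emeasure_PiM_insert_eq_nn_integral_sections[OF I \<kappa>] \<mu> \<nu> A nn_integral_mono)
qed

lemma emeasure_PiM_mono_sectionwise:
  fixes \<mu> \<nu> :: "'i \<Rightarrow> 'x measure"
  assumes I: "finite I"
    and \<mu>: "\<And>i. prob_space (\<mu> i)" and \<nu>: "\<And>i. prob_space (\<nu> i)"
    and sets_eq: "\<And>i. sets (\<nu> i) = sets (\<mu> i)"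
    and A: "A \<in> sets (PiM I \<mu>)"
    and sections: "\<And>i x. i \<in> I \<Longrightarrow> x \<in> space (PiM (I - {i}) \<mu>) \<Longrightarrow>
      emeasure (\<nu> i) {y\<in>space (\<nu> i). x(i := y) \<in> A} \<le> emeasure (\<mu> i) {y\<in>space (\<mu> i). x(i := y) \<in> A}"
  shows "emeasure (PiM I \<nu>) A \<le> emeasure (PiM I \<mu>) A"
proof -
  define mixed where "mixed D i = (if i \<in> D then \<nu> i else \<mu> i)" for D i
  have sets_mixed: "sets (PiM J (mixed D)) = sets (PiM J \<mu>)" for J D
    by (rule sets_PiM_cong) (auto simp: mixed_def sets_eq)
  have space_mixed: "space (PiM J (mixed D)) = space (PiM J \<mu>)" for J D
    using sets_mixed by (rule sets_eq_imp_space_eq)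
  have "emeasure (PiM I (mixed D)) A \<le> emeasure (PiM I \<mu>) A" if "D \<subseteq> I" for D
    using finite_subset[OF that I] that
  proof (induction D rule: finite_induct)
    case empty
    then show ?case by (simp add: mixed_def)
  next
    case (insert i D)
    have I_eq: "I = insert i (I - {i})" using insert.prems by auto
    have "emeasure (PiM I (mixed (insert i D))) A = emeasure (PiM (insert i (I - {i})) ((mixed D)(i := \<nu> i))) A"
      by (subst I_eq) (auto simp: mixed_def fun_upd_def intro!: arg_cong2[where f=emeasure] PiM_cong)
    also have "\<dots> \<le> emeasure (PiM (insert i (I - {i})) ((mixed D)(i := \<mu> i))) A"
    proof (rule emeasure_PiM_fun_upd_mono)
      show "A \<in> sets (PiM (insert i (I - {i})) ((mixed D)(i := \<mu> i)))"
        using A sets_PiM_cong[OF refl, of _ "(mixed D)(i := \<mu> i)" \<mu>] I_eq by (auto simp: mixed_def sets_eq)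
      show "emeasure (\<nu> i) {y\<in>space (\<nu> i). x(i := y) \<in> A} \<le> emeasure (\<mu> i) {y\<in>space (\<mu> i). x(i := y) \<in> A}"
        if "x \<in> space (PiM (I - {i}) (mixed D))" for x
        using sections[of i x] that insert.prems by (auto simp: space_mixed)
    qed (use I \<mu> \<nu> sets_eq in \<open>auto simp: mixed_def\<close>)
    also have "\<dots> = emeasure (PiM I (mixed D)) A"
      using insert.hyps(2) by (subst (2) I_eq) (auto simp: mixed_def fun_upd_def intro!: arg_cong2[where f=emeasure] PiM_cong)
    also have "\<dots> \<le> emeasure (PiM I \<mu>) A"
      using insert by simp
    finally show ?case .
  qed
  from this[of I] show ?thesis
    by (simp add: mixed_def cong: PiM_cong)
qed

section \<open>Events on fibre configurations\<close>

definition retains_some :: "'a list set \<Rightarrow> ('a \<Rightarrow> bool) \<Rightarrow> bool" where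
  "retains_some T R \<longleftrightarrow> (\<exists>t\<in>T. \<forall>x\<in>set t. R x)"

lemma retains_some_mono:
  assumes "retains_some T R" and "\<And>t. t \<in> T \<Longrightarrow> \<exists>t'\<in>T'. set t' \<subseteq> set t"
  shows "retains_some T' R"
  using assms unfolding retains_some_def by blast

lemma pred_retains_some:
  fixes T :: "'a::countable list set"
  assumes "\<And>t x. t \<in> T \<Longrightarrow> x \<in> set t \<Longrightarrow> Measurable.pred M (Q x)"
  shows "Measurable.pred M (\<lambda>\<omega>. retains_some T (\<lambda>x. Q x \<omega>))"
proof -
  have "{\<omega>\<in>space M. retains_some T (\<lambda>x. Q x \<omega>)} = (\<Union>t\<in>T. {\<omega>\<in>space M. \<forall>x\<in>set t. Q x \<omega>})"
    unfolding retains_some_def by auto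
  also have "\<dots> \<in> sets M"
  proof (rule sets.countable_UN')
    show "countable T" by (rule countable_subset[OF subset_UNIV]) simp
    show "(\<lambda>t. {\<omega>\<in>space M. \<forall>x\<in>set t. Q x \<omega>}) ` T \<subseteq> sets M"
      using assms by (auto simp: pred_def)
  qed
  finally show ?thesis unfolding pred_def .
qed

definition fibre_space :: "('a \<Rightarrow> 'b) \<Rightarrow> 'b \<Rightarrow> ('a \<Rightarrow> bool) measure" where
  "fibre_space \<pi> v = PiM (\<pi> -` {v}) (\<lambda>_. count_space UNIV)"

definition join_fibres :: "('a \<Rightarrow> 'b) \<Rightarrow> ('b \<Rightarrow> 'a \<Rightarrow> bool) \<Rightarrow> 'a \<Rightarrow> bool" where
  "join_fibres \<pi> w x = w (\<pi> x) x"

lemma join_fibres_restrict: "join_fibres \<pi> (\<lambda>v. restrict (f v) (\<pi> -` {v})) = (\<lambda>x. f (\<pi> x) x)"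
  by (simp add: join_fibres_def fun_eq_iff)

lemma pred_fibre_space_component:
  "\<pi> x = v \<Longrightarrow> Measurable.pred (fibre_space \<pi> v) (\<lambda>a. a x)"
  unfolding fibre_space_def by (rule measurable_component_singleton) simp

lemma pred_join_fibres_update:
  "Measurable.pred (fibre_space \<pi> v) (\<lambda>a. join_fibres \<pi> (w(v := a)) x)"
  by (cases "\<pi> x = v") (auto simp: join_fibres_def intro: pred_fibre_space_component)

lemma retains_some_section_cases:
  assumes inj: "\<And>t. t \<in> T \<Longrightarrow> inj_on \<pi> (set t)"
  obtains "\<And>a. retains_some T (join_fibres \<pi> (w(v := a)))"
  | "\<And>a. \<not> retains_some T (join_fibres \<pi> (w(v := a)))"
  | x0 where "\<pi> x0 = v" and "\<And>a. a x0 \<Longrightarrow> retains_some T (join_fibres \<pi> (w(v := a)))"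
      and "\<And>a. (\<And>x. \<pi> x = v \<Longrightarrow> \<not> a x) \<Longrightarrow> \<not> retains_some T (join_fibres \<pi> (w(v := a)))"
proof -
  define outside where "outside t \<longleftrightarrow> (\<forall>x\<in>set t. \<pi> x \<noteq> v \<longrightarrow> w (\<pi> x) x)" for t
  have section_iff: "retains_some T (join_fibres \<pi> (w(v := a))) \<longleftrightarrow>
      (\<exists>t\<in>T. outside t \<and> (\<forall>x\<in>set t. \<pi> x = v \<longrightarrow> a x))" for a
    unfolding retains_some_def join_fibres_def outside_def by auto
  consider (avoid) "\<exists>t\<in>T. outside t \<and> (\<forall>x\<in>set t. \<pi> x \<noteq> v)"
    | (meet) t where "t \<in> T" "outside t" "\<not> (\<exists>t\<in>T. outside t \<and> (\<forall>x\<in>set t. \<pi> x \<noteq> v))"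
    | (none) "\<forall>t\<in>T. \<not> outside t"
    by blast
  then show thesis
  proof cases
    case avoid
    then show thesis using that(1) unfolding section_iff by blast
  next
    case meet
    then obtain x0 where x0: "x0 \<in> set t" "\<pi> x0 = v" by blast
    have "x = x0" if "x \<in> set t" "\<pi> x = v" for x
      using inj[OF meet(1)] that x0 by (auto dest: inj_onD)
    then have "a x0 \<Longrightarrow> retains_some T (join_fibres \<pi> (w(v := a)))" for a
      unfolding section_iff using meet(1,2) by blast
    moreover have "\<not> retains_some T (join_fibres \<pi> (w(v := a)))" if "\<And>x. \<pi> x = v \<Longrightarrow> \<not> a x" for a
      unfolding section_iff using meet(3) that by blast
    ultimately show thesis using that(3) x0(2) by blast
  next
    case none
    then show thesis using that(2) unfolding section_iff by blast
  qed
qed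

lemma emeasure_fibre_section_mono:
  fixes \<pi> :: "'a::countable \<Rightarrow> 'b"
  assumes \<mu>: "prob_space \<mu>" "sets \<mu> = sets (fibre_space \<pi> v)"
    and \<nu>: "prob_space \<nu>" "sets \<nu> = sets (fibre_space \<pi> v)"
    and \<mu>_ge: "\<And>x. \<pi> x = v \<Longrightarrow> q \<le> emeasure \<mu> {a\<in>space \<mu>. a x}"
    and \<nu>_le: "\<And>S. restrict (\<lambda>_. False) (\<pi> -` {v}) \<notin> S \<Longrightarrow> emeasure \<nu> S \<le> q"
    and inj: "\<And>t. t \<in> T \<Longrightarrow> inj_on \<pi> (set t)"
  shows "emeasure \<nu> {a\<in>space (fibre_space \<pi> v). retains_some T (join_fibres \<pi> (w(v := a)))}
       \<le> emeasure \<mu> {a\<in>space (fibre_space \<pi> v). retains_some T (join_fibres \<pi> (w(v := a)))}"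
    (is "emeasure \<nu> ?S \<le> emeasure \<mu> ?S")
proof -
  interpret \<mu>: prob_space \<mu> by fact
  interpret \<nu>: prob_space \<nu> by fact
  have space_\<mu>: "space \<mu> = space (fibre_space \<pi> v)" by (rule sets_eq_imp_space_eq) fact
  have space_\<nu>: "space \<nu> = space (fibre_space \<pi> v)" by (rule sets_eq_imp_space_eq) fact
  have "?S \<in> sets (fibre_space \<pi> v)"
    using pred_retains_some[OF pred_join_fibres_update] unfolding pred_def .
  then have S_sets: "?S \<in> sets \<mu>" using \<mu>(2) by simp
  show ?thesis
  proof (rule retains_some_section_cases[where T=T and \<pi>=\<pi> and w=w and v=v, OF inj])
    assume "\<And>a. retains_some T (join_fibres \<pi> (w(v := a)))"
    then have "?S = space \<nu>" "?S = space \<mu>" by (auto simp: space_\<mu> space_\<nu>)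
    then show ?thesis by (metis \<mu>.emeasure_space_1 \<nu>.emeasure_space_1 order_refl)
  next
    assume "\<And>a. \<not> retains_some T (join_fibres \<pi> (w(v := a)))"
    then show ?thesis by simp
  next
    fix x0 assume x0: "\<pi> x0 = v" "\<And>a. a x0 \<Longrightarrow> retains_some T (join_fibres \<pi> (w(v := a)))"
      "\<And>a. (\<And>x. \<pi> x = v \<Longrightarrow> \<not> a x) \<Longrightarrow> \<not> retains_some T (join_fibres \<pi> (w(v := a)))"
    have "emeasure \<nu> ?S \<le> q"
      by (rule \<nu>_le) (use x0(3)[of "restrict (\<lambda>_. False) (\<pi> -` {v})"] in auto)
    also have "\<dots> \<le> emeasure \<mu> {a\<in>space \<mu>. a x0}" by (rule \<mu>_ge) fact
    also have "\<dots> \<le> emeasure \<mu> ?S"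
      by (rule emeasure_mono[OF _ S_sets]) (use x0(2) in \<open>auto simp: space_\<mu>\<close>)
    finally show ?thesis .
  qed
qed

lemma sets_PiM_retains_some:
  fixes \<pi> :: "'a::countable \<Rightarrow> 'b"
  assumes "\<And>t. t \<in> T \<Longrightarrow> \<pi> ` set t \<subseteq> V"
  shows "{w\<in>space (PiM V (fibre_space \<pi>)). retains_some T (join_fibres \<pi> w)} \<in> sets (PiM V (fibre_space \<pi>))"
proof -
  have "Measurable.pred (PiM V (fibre_space \<pi>)) (\<lambda>w. retains_some T (\<lambda>x. join_fibres \<pi> w x))"
  proof (rule pred_retains_some)
    fix t x assume "t \<in> T" "x \<in> set t"
    then have "\<pi> x \<in> V" using assms by blast
    then have "(\<lambda>w. w (\<pi> x)) \<in> measurable (PiM V (fibre_space \<pi>)) (fibre_space \<pi> (\<pi> x))"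
      by (rule measurable_component_singleton)
    then show "Measurable.pred (PiM V (fibre_space \<pi>)) (\<lambda>w. join_fibres \<pi> w x)"
      unfolding join_fibres_def by (rule measurable_compose) (rule pred_fibre_space_component, rule refl)
  qed
  then show ?thesis unfolding pred_def by simp
qed

lemma emeasure_PiM_retains_some_mono:
  fixes \<pi> :: "'a::countable \<Rightarrow> 'b"
  assumes V: "finite V"
    and \<mu>: "\<And>v. prob_space (\<mu> v)" "\<And>v. sets (\<mu> v) = sets (fibre_space \<pi> v)"
    and \<nu>: "\<And>v. prob_space (\<nu> v)" "\<And>v. sets (\<nu> v) = sets (fibre_space \<pi> v)"
    and \<mu>_ge: "\<And>x. q (\<pi> x) \<le> emeasure (\<mu> (\<pi> x)) {a\<in>space (\<mu> (\<pi> x)). a x}"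
    and \<nu>_le: "\<And>v S. restrict (\<lambda>_. False) (\<pi> -` {v}) \<notin> S \<Longrightarrow> emeasure (\<nu> v) S \<le> q v"
    and T: "\<And>t. t \<in> T \<Longrightarrow> inj_on \<pi> (set t)" "\<And>t. t \<in> T \<Longrightarrow> \<pi> ` set t \<subseteq> V"
  shows "emeasure (PiM V \<nu>) {w\<in>space (PiM V (fibre_space \<pi>)). retains_some T (join_fibres \<pi> w)}
       \<le> emeasure (PiM V \<mu>) {w\<in>space (PiM V (fibre_space \<pi>)). retains_some T (join_fibres \<pi> w)}"
    (is "emeasure _ ?E \<le> emeasure _ ?E")
proof (rule emeasure_PiM_mono_sectionwise[OF V \<mu>(1) \<nu>(1)])
  have sets_\<mu>: "sets (PiM V \<mu>) = sets (PiM V (fibre_space \<pi>))"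
    by (rule sets_PiM_cong) (simp_all add: \<mu>(2))
  show "?E \<in> sets (PiM V \<mu>)"
    unfolding sets_\<mu> using sets_PiM_retains_some[OF T(2)] .
  show "sets (\<nu> v) = sets (\<mu> v)" for v by (simp add: \<mu>(2) \<nu>(2))
  fix v x assume v: "v \<in> V" and x: "x \<in> space (PiM (V - {v}) \<mu>)"
  have section_eq: "{a\<in>space (\<rho> v). x(v := a) \<in> ?E}
      = {a\<in>space (fibre_space \<pi> v). retains_some T (join_fibres \<pi> (x(v := a)))}"
    if "sets (\<rho> v) = sets (fibre_space \<pi> v)" for \<rho> :: "'b \<Rightarrow> ('a \<Rightarrow> bool) measure"
    using sets_eq_imp_space_eq[OF that] x v
    by (auto simp: space_PiM \<mu>(2)[THEN sets_eq_imp_space_eq] PiE_iff extensional_def)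
  show "emeasure (\<nu> v) {a\<in>space (\<nu> v). x(v := a) \<in> ?E} \<le> emeasure (\<mu> v) {a\<in>space (\<mu> v). x(v := a) \<in> ?E}"
    unfolding section_eq[of \<nu>, OF \<nu>(2)] section_eq[of \<mu>, OF \<mu>(2)]
    by (rule emeasure_fibre_section_mono[OF \<mu>(1,2) \<nu>(1,2) _ \<nu>_le T(1)]) (use \<mu>_ge in metis)
qed

lemma emeasure_retains_some_indep_fibres:
  fixes \<pi> :: "'a::countable \<Rightarrow> 'b" and Z :: "'b \<Rightarrow> 'c \<Rightarrow> 'a \<Rightarrow> bool"
  assumes P: "prob_space P" and V: "V \<noteq> {}"
    and indep: "prob_space.indep_vars P (fibre_space \<pi>) Z V"
    and T: "\<And>t. t \<in> T \<Longrightarrow> \<pi> ` set t \<subseteq> V"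
  shows "emeasure P {\<omega>\<in>space P. retains_some T (join_fibres \<pi> (\<lambda>v. Z v \<omega>))}
       = emeasure (PiM V (\<lambda>v. distr P (fibre_space \<pi> v) (Z v)))
           {w\<in>space (PiM V (fibre_space \<pi>)). retains_some T (join_fibres \<pi> w)}"
    (is "_ = emeasure _ ?E")
proof -
  interpret prob_space P by fact
  have Z: "\<And>v. v \<in> V \<Longrightarrow> random_variable (fibre_space \<pi> v) (Z v)"
    using indep unfolding indep_vars_def by blast
  define joint where "joint \<omega> = (\<lambda>v\<in>V. Z v \<omega>)" for \<omega>
  have joint_distr: "distr P (PiM V (fibre_space \<pi>)) joint = PiM V (\<lambda>v. distr P (fibre_space \<pi> v) (Z v))"
    using indep_vars_iff_distr_eq_PiM'[OF V Z] indep unfolding joint_def by simp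
  have joint: "joint \<in> measurable P (PiM V (fibre_space \<pi>))"
    unfolding joint_def by (rule measurable_restrict) (rule Z)
  have "joint -` ?E \<inter> space P = {\<omega>\<in>space P. retains_some T (join_fibres \<pi> (\<lambda>v. Z v \<omega>))}"
    using measurable_space[OF joint] T
    by (auto simp: joint_def retains_some_def join_fibres_def image_subset_iff)
  then show ?thesis
    using emeasure_distr[OF joint sets_PiM_retains_some[OF T]] by (simp add: joint_distr)
qed

section \<open>Site percolation\<close>

lemma prob_space_site_perc: "prob_space (site_perc p)"
  unfolding site_perc_def by (rule prob_space_PiM) (rule prob_space_measure_pmf)

lemma site_perc_coordinate_measurable:
  "(\<lambda>Y. Y v) \<in> measurable (site_perc p) (count_space UNIV)"
proof -
  have "(\<lambda>Y. Y v) \<in> measurable (site_perc p) (measure_pmf (bernoulli_pmf (p v)))"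
    unfolding site_perc_def by (rule measurable_component_singleton) simp
  then show ?thesis by (simp cong: measurable_cong_sets)
qed

lemma distr_site_perc_coordinate:
  "distr (site_perc p) (measure_pmf (bernoulli_pmf (p v))) (\<lambda>Y. Y v) = measure_pmf (bernoulli_pmf (p v))"
  unfolding site_perc_def by (rule distr_PiM_component) (auto intro: prob_space_measure_pmf)

lemma emeasure_site_perc_retained:
  assumes "0 \<le> p v" "p v \<le> 1"
  shows "emeasure (site_perc p) {Y\<in>space (site_perc p). Y v} = ennreal (p v)"
proof -
  have Y_v: "(\<lambda>Y. Y v) \<in> measurable (site_perc p) (measure_pmf (bernoulli_pmf (p v)))"
    using site_perc_coordinate_measurable by (simp cong: measurable_cong_sets)
  have "{Y\<in>space (site_perc p). Y v} = (\<lambda>Y. Y v) -` {True} \<inter> space (site_perc p)" by auto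
  then have "emeasure (site_perc p) {Y\<in>space (site_perc p). Y v}
      = emeasure (distr (site_perc p) (measure_pmf (bernoulli_pmf (p v))) (\<lambda>Y. Y v)) {True}"
    by (simp add: emeasure_distr[OF Y_v])
  also have "\<dots> = ennreal (p v)"
    unfolding distr_site_perc_coordinate using assms by (simp add: emeasure_pmf_single)
  finally show ?thesis .
qed

lemma indep_vars_site_perc:
  "prob_space.indep_vars (site_perc p) (\<lambda>v. measure_pmf (bernoulli_pmf (p v))) (\<lambda>v Y. Y v) UNIV"
proof -
  interpret prob_space "site_perc p" by (rule prob_space_site_perc)
  have "random_variable (measure_pmf (bernoulli_pmf (p v))) (\<lambda>Y. Y v)" for v
    unfolding site_perc_def by (rule measurable_component_singleton) simp
  moreover have "distr (site_perc p) (PiM UNIV (\<lambda>v. measure_pmf (bernoulli_pmf (p v)))) (\<lambda>Y. \<lambda>v\<in>UNIV. Y v)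
      = PiM UNIV (\<lambda>v. distr (site_perc p) (measure_pmf (bernoulli_pmf (p v))) (\<lambda>Y. Y v))"
    unfolding distr_site_perc_coordinate by (simp add: site_perc_def restrict_UNIV)
  ultimately show ?thesis
    by (subst indep_vars_iff_distr_eq_PiM') auto
qed

lemma constant_fibre_measurable:
  "(\<lambda>b. restrict (\<lambda>_. b) (\<pi> -` {v})) \<in> measurable (count_space UNIV) (fibre_space \<pi> v)"
  by (simp add: measurable_count_space_eq1 fibre_space_def space_PiM)

lemma indep_vars_site_perc_fibres:
  fixes \<pi> :: "'a \<Rightarrow> 'b"
  shows "prob_space.indep_vars (site_perc p) (fibre_space \<pi>) (\<lambda>v Y. restrict (\<lambda>_. Y v) (\<pi> -` {v})) UNIV"
proof -
  interpret prob_space "site_perc p" by (rule prob_space_site_perc)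
  have "indep_vars (fibre_space \<pi>) (\<lambda>v Y. (\<lambda>b. restrict (\<lambda>_. b) (\<pi> -` {v})) (Y v)) UNIV"
  proof (rule indep_vars_compose2[OF indep_vars_site_perc])
    fix v
    show "(\<lambda>b. restrict (\<lambda>_. b) (\<pi> -` {v})) \<in> measurable (measure_pmf (bernoulli_pmf (p v))) (fibre_space \<pi> v)"
      using constant_fibre_measurable by (simp cong: measurable_cong_sets)
  qed
  then show ?thesis by simp
qed

lemma pred_site_perc_retains_some:
  fixes T :: "'a::countable list set"
  shows "Measurable.pred (site_perc p) (\<lambda>Y. retains_some T (Y \<circ> \<pi>))"
  using pred_retains_some[where Q="\<lambda>x Y. Y (\<pi> x)", OF site_perc_coordinate_measurable]
  by (simp add: comp_def)

lemma emeasure_distr_fibre_component: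
  assumes X: "(\<lambda>\<omega>. restrict (X \<omega>) (\<pi> -` {\<pi> x})) \<in> measurable M (fibre_space \<pi> (\<pi> x))"
  shows "emeasure (distr M (fibre_space \<pi> (\<pi> x)) (\<lambda>\<omega>. restrict (X \<omega>) (\<pi> -` {\<pi> x})))
           {a\<in>space (fibre_space \<pi> (\<pi> x)). a x}
       = emeasure M {\<omega>\<in>space M. X \<omega> x}"
proof -
  have "{a\<in>space (fibre_space \<pi> (\<pi> x)). a x} \<in> sets (fibre_space \<pi> (\<pi> x))"
    using pred_fibre_space_component[of \<pi> x "\<pi> x"] unfolding pred_def by simp
  moreover have "(\<lambda>\<omega>. restrict (X \<omega>) (\<pi> -` {\<pi> x})) -` {a\<in>space (fibre_space \<pi> (\<pi> x)). a x} \<inter> space M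
      = {\<omega>\<in>space M. X \<omega> x}"
    using measurable_space[OF X] by auto
  ultimately show ?thesis by (simp add: emeasure_distr[OF X])
qed

lemma emeasure_site_perc_fibre_le:
  assumes p: "0 \<le> p v" "p v \<le> 1"
    and S: "restrict (\<lambda>_. False) (\<pi> -` {v}) \<notin> S"
  shows "emeasure (distr (site_perc p) (fibre_space \<pi> v) (\<lambda>Y. restrict (\<lambda>_. Y v) (\<pi> -` {v}))) S \<le> p v"
proof (cases "S \<in> sets (fibre_space \<pi> v)")
  case True
  have Y_fib: "(\<lambda>Y. restrict (\<lambda>_. Y v) (\<pi> -` {v})) \<in> measurable (site_perc p) (fibre_space \<pi> v)"
    using measurable_compose[OF site_perc_coordinate_measurable constant_fibre_measurable] .
  have "(\<lambda>Y. restrict (\<lambda>_. Y v) (\<pi> -` {v})) -` S \<inter> space (site_perc p) \<subseteq> {Y\<in>space (site_perc p). Y v}"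
  proof safe
    fix Y assume "restrict (\<lambda>_. Y v) (\<pi> -` {v}) \<in> S"
    then show "Y v" using S by (cases "Y v") auto
  qed
  then have "emeasure (site_perc p) ((\<lambda>Y. restrict (\<lambda>_. Y v) (\<pi> -` {v})) -` S \<inter> space (site_perc p))
      \<le> emeasure (site_perc p) {Y\<in>space (site_perc p). Y v}"
    using site_perc_coordinate_measurable[of v p] by (intro emeasure_mono) (auto simp: pred_def)
  then show ?thesis
    by (simp add: emeasure_distr[OF Y_fib True] emeasure_site_perc_retained[of p v, OF p])
qed (simp add: emeasure_notin_sets)

lemma emeasure_site_perc_retains_some_le_finite:
  fixes \<pi> :: "'a::countable \<Rightarrow> 'b" and X :: "'c \<Rightarrow> 'a \<Rightarrow> bool"
  assumes p: "\<And>v. 0 \<le> p v \<and> p v \<le> 1" and M: "prob_space M"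
    and X_indep: "prob_space.indep_vars M (fibre_space \<pi>) (\<lambda>v \<omega>. restrict (X \<omega>) (\<pi> -` {v})) UNIV"
    and X_prob: "\<And>x. p (\<pi> x) \<le> measure M {\<omega>\<in>space M. X \<omega> x}"
    and T: "finite T" "\<And>t. t \<in> T \<Longrightarrow> inj_on \<pi> (set t)"
  shows "emeasure (site_perc p) {Y\<in>space (site_perc p). retains_some T (Y \<circ> \<pi>)}
       \<le> emeasure M {\<omega>\<in>space M. retains_some T (X \<omega>)}"
proof -
  interpret M: prob_space M by fact
  interpret S: prob_space "site_perc p" by (rule prob_space_site_perc)
  \<comment> \<open>\<open>undefined\<close> only makes \<open>V\<close> nonempty, as \<open>indep_vars_iff_distr_eq_PiM'\<close> requires\<close>
  define V where "V = insert undefined (\<pi> ` (\<Union>t\<in>T. set t))"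
  have V: "finite V" "V \<noteq> {}" and T_V: "\<And>t. t \<in> T \<Longrightarrow> \<pi> ` set t \<subseteq> V"
    unfolding V_def using T(1) by auto
  define X_fib where "X_fib = (\<lambda>v \<omega>. restrict (X \<omega>) (\<pi> -` {v}))"
  define Y_fib where "Y_fib = (\<lambda>v (Y :: 'b \<Rightarrow> bool). restrict (\<lambda>_. Y v) (\<pi> -` {v}))"
  define \<mu> where "\<mu> = (\<lambda>v. distr M (fibre_space \<pi> v) (X_fib v))"
  define \<nu> where "\<nu> = (\<lambda>v. distr (site_perc p) (fibre_space \<pi> v) (Y_fib v))"
  define E where "E = {w\<in>space (PiM V (fibre_space \<pi>)). retains_some T (join_fibres \<pi> w)}"
  have X_fib: "X_fib v \<in> measurable M (fibre_space \<pi> v)" for v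
    using X_indep unfolding M.indep_vars_def X_fib_def by blast
  have Y_fib: "Y_fib v \<in> measurable (site_perc p) (fibre_space \<pi> v)" for v
    using indep_vars_site_perc_fibres[of p \<pi>] unfolding S.indep_vars_def Y_fib_def by blast
  have "emeasure (site_perc p) {Y\<in>space (site_perc p). retains_some T (Y \<circ> \<pi>)} = emeasure (PiM V \<nu>) E"
    using emeasure_retains_some_indep_fibres[where T=T, OF S.prob_space_axioms V(2)
        S.indep_vars_subset[OF indep_vars_site_perc_fibres[of p \<pi>]] T_V]
    by (simp add: \<nu>_def Y_fib_def E_def join_fibres_restrict comp_def)
  also have "\<dots> \<le> emeasure (PiM V \<mu>) E"
    unfolding E_def
  proof (rule emeasure_PiM_retains_some_mono[OF V(1), where q="\<lambda>v. ennreal (p v)"])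
    show "prob_space (\<mu> v)" "sets (\<mu> v) = sets (fibre_space \<pi> v)" for v
      unfolding \<mu>_def using M.prob_space_distr[OF X_fib] by simp_all
    show "prob_space (\<nu> v)" "sets (\<nu> v) = sets (fibre_space \<pi> v)" for v
      unfolding \<nu>_def using S.prob_space_distr[OF Y_fib] by simp_all
    show "ennreal (p (\<pi> x)) \<le> emeasure (\<mu> (\<pi> x)) {a\<in>space (\<mu> (\<pi> x)). a x}" for x
      using X_prob[of x] emeasure_distr_fibre_component[OF X_fib[unfolded X_fib_def]]
      by (simp add: \<mu>_def X_fib_def M.emeasure_eq_measure ennreal_leI)
    show "emeasure (\<nu> v) S \<le> ennreal (p v)" if "restrict (\<lambda>_. False) (\<pi> -` {v}) \<notin> S" for v S
      unfolding \<nu>_def Y_fib_def using emeasure_site_perc_fibre_le[OF _ _ that] p by simp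
  qed (use T T_V in auto)
  also have "\<dots> = emeasure M {\<omega>\<in>space M. retains_some T (X \<omega>)}"
    using emeasure_retains_some_indep_fibres[where T=T, OF M V(2) M.indep_vars_subset[OF X_indep] T_V]
    by (simp add: \<mu>_def X_fib_def E_def join_fibres_restrict)
  finally show ?thesis .
qed

lemma emeasure_site_perc_retains_some_le:
  fixes \<pi> :: "'a::countable \<Rightarrow> 'b" and X :: "'c \<Rightarrow> 'a \<Rightarrow> bool"
  assumes p: "\<And>v. 0 \<le> p v \<and> p v \<le> 1" and M: "prob_space M"
    and X_meas: "\<And>x. {\<omega>\<in>space M. X \<omega> x} \<in> sets M"
    and X_indep: "prob_space.indep_vars M (fibre_space \<pi>) (\<lambda>v \<omega>. restrict (X \<omega>) (\<pi> -` {v})) UNIV"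
    and X_prob: "\<And>x. p (\<pi> x) \<le> measure M {\<omega>\<in>space M. X \<omega> x}"
    and T: "\<And>t. t \<in> T \<Longrightarrow> inj_on \<pi> (set t)"
  shows "emeasure (site_perc p) {Y\<in>space (site_perc p). retains_some T (Y \<circ> \<pi>)}
       \<le> emeasure M {\<omega>\<in>space M. retains_some T (X \<omega>)}"
proof -
  define T_upto where "T_upto j = {t\<in>T. to_nat t \<le> j}" for j
  have finite: "finite (T_upto j)" for j
  proof (rule finite_subset)
    show "T_upto j \<subseteq> to_nat -` {..j}" by (auto simp: T_upto_def)
  qed (rule finite_vimageI[OF finite_atMost inj_to_nat])
  have sets_M: "{\<omega>\<in>space M. retains_some T (X \<omega>)} \<in> sets M"
    using pred_retains_some[where T=T and M=M and Q="\<lambda>x \<omega>. X \<omega> x"] X_meas by (simp add: pred_def)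
  show ?thesis
  proof (rule emeasure_le_if_incseq_cover)
    show "incseq (\<lambda>j. {Y\<in>space (site_perc p). retains_some (T_upto j) (Y \<circ> \<pi>)})"
      by (auto simp: incseq_def T_upto_def retains_some_def)
    show "{Y\<in>space (site_perc p). retains_some (T_upto j) (Y \<circ> \<pi>)} \<in> sets (site_perc p)" for j
      using pred_site_perc_retains_some by (simp add: pred_def)
    show "{Y\<in>space (site_perc p). retains_some T (Y \<circ> \<pi>)}
        \<subseteq> (\<Union>j. {Y\<in>space (site_perc p). retains_some (T_upto j) (Y \<circ> \<pi>)})"
      by (auto simp: T_upto_def retains_some_def)
    fix j
    have "emeasure (site_perc p) {Y\<in>space (site_perc p). retains_some (T_upto j) (Y \<circ> \<pi>)}
        \<le> emeasure M {\<omega>\<in>space M. retains_some (T_upto j) (X \<omega>)}"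
      using finite T by (intro emeasure_site_perc_retains_some_le_finite[OF p M X_indep X_prob])
        (auto simp: T_upto_def)
    also have "\<dots> \<le> emeasure M {\<omega>\<in>space M. retains_some T (X \<omega>)}"
      by (rule emeasure_mono[OF _ sets_M]) (auto simp: T_upto_def retains_some_def)
    finally show "emeasure (site_perc p) {Y\<in>space (site_perc p). retains_some (T_upto j) (Y \<circ> \<pi>)}
        \<le> emeasure M {\<omega>\<in>space M. retains_some T (X \<omega>)}" .
  qed
qed

section \<open>Koenig's lemma for retained paths\<close>

lemma finite_pigeonhole_antimono:
  assumes K: "finite K" and ex: "\<And>l::nat. \<exists>x\<in>K. P x l"
    and antimono: "\<And>x l l'. P x l \<Longrightarrow> l' \<le> l \<Longrightarrow> P x l'"
  shows "\<exists>x\<in>K. \<forall>l. P x l"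
proof (rule ccontr)
  assume "\<not> (\<exists>x\<in>K. \<forall>l. P x l)"
  then have "\<forall>x\<in>K. \<exists>l. \<not> P x l" by blast
  then obtain bound where bound: "\<And>x. x \<in> K \<Longrightarrow> \<not> P x (bound x)" by metis
  obtain x where x: "x \<in> K" "P x (Max (bound ` K))" using ex by blast
  have "bound x \<le> Max (bound ` K)" using K x(1) by simp
  then have "P x (bound x)" using antimono x(2) by blast
  with bound x(1) show False by blast
qed

definition retained_path :: "('v \<Rightarrow> 'v \<Rightarrow> bool) \<Rightarrow> ('v \<Rightarrow> bool) \<Rightarrow> nat \<Rightarrow> (nat \<Rightarrow> 'v) \<Rightarrow> bool" where
  "retained_path E R l f \<longleftrightarrow> inj_on f {..l} \<and> (\<forall>i<l. E (f i) (f (Suc i))) \<and> (\<forall>i\<le>l. R (f i))"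

lemma retained_path_mono: "retained_path E R l f \<Longrightarrow> l' \<le> l \<Longrightarrow> retained_path E R l' f"
  unfolding retained_path_def by (auto intro: inj_on_subset)

lemma retained_path_cong: "(\<And>i. i \<le> l \<Longrightarrow> f i = g i) \<Longrightarrow> retained_path E R l f = retained_path E R l g"
  unfolding retained_path_def by (auto simp: inj_on_def)

lemma inf_retained_path_iff: "inf_path E g \<and> (\<forall>m. R (g m)) \<longleftrightarrow> (\<forall>l. retained_path E R l g)"
proof
  assume "\<forall>l. retained_path E R l g"
  then have "inj_on g {..l}" "\<forall>i<l. E (g i) (g (Suc i))" "\<forall>i\<le>l. R (g i)" for l
    unfolding retained_path_def by blast+
  moreover have "inj_on g {0..}"
  proof (rule inj_onI)
    fix i j assume "g i = g j"
    with calculation(1)[of "max i j"] show "i = j" by (rule inj_onD) auto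
  qed
  ultimately show "inf_path E g \<and> (\<forall>m. R (g m))"
    unfolding inf_path_from_def by blast
qed (auto simp: inf_path_from_def retained_path_def intro: inj_on_subset)

definition extendable :: "('v \<Rightarrow> 'v \<Rightarrow> bool) \<Rightarrow> ('v \<Rightarrow> bool) \<Rightarrow> nat \<Rightarrow> (nat \<Rightarrow> 'v) \<Rightarrow> bool" where
  "extendable E R l f \<longleftrightarrow> (\<forall>L. \<exists>h. retained_path E R L h \<and> (\<forall>i\<le>l. h i = f i))"

lemma extendable_imp_retained_path:
  assumes "extendable E R l f"
  shows "retained_path E R l f"
proof -
  obtain h where "retained_path E R l h" "\<And>i. i \<le> l \<Longrightarrow> h i = f i"
    using assms unfolding extendable_def by blast
  then show ?thesis using retained_path_cong[of l h f] by simp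
qed

lemma extendable_step:
  assumes f: "extendable E R l f" and finite: "finite {y. E (f l) y}"
  shows "\<exists>w. extendable E R (Suc l) (f(Suc l := w))"
proof -
  define agrees where "agrees w h \<longleftrightarrow> (\<forall>i\<le>Suc l. h i = (f(Suc l := w)) i)" for w h
  have "\<exists>w\<in>{y. E (f l) y}. \<exists>h. retained_path E R L h \<and> agrees w h" for L
  proof -
    obtain h where h: "retained_path E R (max L (Suc l)) h" "\<And>i. i \<le> l \<Longrightarrow> h i = f i"
      using f unfolding extendable_def by blast
    have "E (h l) (h (Suc l))" using h(1) unfolding retained_path_def by simp
    then have "E (f l) (h (Suc l))" using h(2) by simp
    moreover have "retained_path E R L h" using h(1) by (rule retained_path_mono) simp
    moreover have "agrees (h (Suc l)) h" using h(2) by (auto simp: agrees_def le_Suc_eq)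
    ultimately show ?thesis by blast
  qed
  then have "\<exists>w\<in>{y. E (f l) y}. \<forall>L. \<exists>h. retained_path E R L h \<and> agrees w h"
  proof (rule finite_pigeonhole_antimono[OF finite])
    fix w L L' assume "\<exists>h. retained_path E R L h \<and> agrees w h" "L' \<le> L"
    then show "\<exists>h. retained_path E R L' h \<and> agrees w h" by (blast intro: retained_path_mono)
  qed
  then show ?thesis unfolding extendable_def agrees_def by blast
qed

lemma has_inf_retained_path_if_extendable:
  assumes lf: "\<And>x. finite {y. E x y}" and f0: "extendable E R 0 f0"
  shows "has_inf_retained_path E R"
proof -
  have "\<exists>F. \<forall>n. extendable E R n (F n) \<and> (\<forall>i\<le>n. F (Suc n) i = F n i)"
  proof (rule dependent_nat_choice)
    show "\<exists>f. extendable E R 0 f" using f0 by blast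
    fix n f assume "extendable E R n f"
    then obtain w where "extendable E R (Suc n) (f(Suc n := w))" using extendable_step lf by blast
    then show "\<exists>g. extendable E R (Suc n) g \<and> (\<forall>i\<le>n. g i = f i)"
      by (intro exI[of _ "f(Suc n := w)"]) simp
  qed
  then obtain F where F: "\<And>n. extendable E R n (F n)" "\<And>n i. i \<le> n \<Longrightarrow> F (Suc n) i = F n i"
    by blast
  have F_stable: "F (n + k) i = F n i" if "i \<le> n" for n k i
    using that by (induction k) (simp_all add: F(2))
  have "retained_path E R n (\<lambda>m. F m m)" for n
  proof -
    have "F n i = F i i" if "i \<le> n" for i
      using F_stable[of i i "n - i"] that by simp
    then show ?thesis
      using extendable_imp_retained_path[OF F(1)[of n]] retained_path_cong[of n "F n" "\<lambda>m. F m m"] by simp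
  qed
  then show ?thesis
    unfolding has_inf_retained_path_def inf_retained_path_iff by blast
qed

lemma has_inf_retained_pathI_finite_starts:
  assumes lf: "\<And>x. finite {y. E x y}" and K: "finite K"
    and paths: "\<And>l. \<exists>f. retained_path E R l f \<and> f 0 \<in> K"
  shows "has_inf_retained_path E R"
proof -
  have "\<exists>x0\<in>K. \<forall>l. \<exists>f. retained_path E R l f \<and> f 0 = x0"
  proof (rule finite_pigeonhole_antimono[OF K])
    show "\<exists>x0\<in>K. \<exists>f. retained_path E R l f \<and> f 0 = x0" for l using paths[of l] by blast
    show "\<exists>f. retained_path E R l' f \<and> f 0 = x0"
      if "\<exists>f. retained_path E R l f \<and> f 0 = x0" "l' \<le> l" for x0 l l'
      using that by (blast intro: retained_path_mono)
  qed
  then obtain x0 where "\<forall>l. \<exists>f. retained_path E R l f \<and> f 0 = x0" by blast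
  then have "extendable E R 0 (\<lambda>_. x0)"
    unfolding extendable_def by simp
  then show ?thesis by (rule has_inf_retained_path_if_extendable[OF lf])
qed

lemma has_inf_retained_path_iff_paths_from:
  assumes lf: "\<And>x. finite {y. E x y}"
  shows "has_inf_retained_path E R \<longleftrightarrow>
    (\<exists>x0. \<forall>l. \<exists>xs. length xs = Suc l \<and> retained_path E R l (nth xs) \<and> xs ! 0 = x0)"
proof
  assume "has_inf_retained_path E R"
  then obtain g where "\<forall>l. retained_path E R l g"
    unfolding has_inf_retained_path_def inf_retained_path_iff by blast
  moreover have "retained_path E R l (nth (map g [0..<Suc l])) = retained_path E R l g" for l
    by (rule retained_path_cong) (simp del: upt_Suc add: nth_map_upt)
  ultimately have "length (map g [0..<Suc l]) = Suc l \<and> retained_path E R l (nth (map g [0..<Suc l]))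
      \<and> map g [0..<Suc l] ! 0 = g 0" for l
    by (simp del: upt_Suc add: nth_map_upt)
  then show "\<exists>x0. \<forall>l. \<exists>xs. length xs = Suc l \<and> retained_path E R l (nth xs) \<and> xs ! 0 = x0"
    by blast
next
  assume "\<exists>x0. \<forall>l. \<exists>xs. length xs = Suc l \<and> retained_path E R l (nth xs) \<and> xs ! 0 = x0"
  then obtain x0 where "\<And>l. \<exists>f. retained_path E R l f \<and> f 0 \<in> {x0}" by blast
  then show "has_inf_retained_path E R"
    by (rule has_inf_retained_pathI_finite_starts[OF lf finite.insertI[OF finite.emptyI]])
qed

lemma pred_has_inf_retained_path:
  fixes E :: "'v::countable \<Rightarrow> 'v \<Rightarrow> bool"
  assumes lf: "\<And>x. finite {y. E x y}" and R: "\<And>x. Measurable.pred M (\<lambda>\<omega>. R \<omega> x)"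
  shows "Measurable.pred M (\<lambda>\<omega>. has_inf_retained_path E (R \<omega>))"
  unfolding has_inf_retained_path_iff_paths_from[OF lf] retained_path_def
  using R by measurable

section \<open>Lifted paths\<close>

(* The bound k on the start index and on the code of the first vertex of a lift leaves only
   finitely many first vertices, which is what Koenig's lemma in L needs. *)
definition lifted_prefixes ::
    "('b \<Rightarrow> 'b \<Rightarrow> bool) \<Rightarrow> ((nat \<Rightarrow> 'b) \<Rightarrow> nat \<times> (nat \<Rightarrow> 'a::countable)) \<Rightarrow> nat \<Rightarrow> nat \<Rightarrow> 'a list set" where
  "lifted_prefixes ES \<Gamma> k N = (\<lambda>\<gamma>. map (snd (\<Gamma> \<gamma>)) [fst (\<Gamma> \<gamma>)..<N]) `
     {\<gamma>. inf_path ES \<gamma> \<and> fst (\<Gamma> \<gamma>) \<le> k \<and> to_nat (snd (\<Gamma> \<gamma>) (fst (\<Gamma> \<gamma>))) \<le> k}"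

lemma inj_on_lifted_prefix:
  assumes lift: "\<And>\<gamma> m. inf_path ES \<gamma> \<Longrightarrow> fst (\<Gamma> \<gamma>) \<le> m \<Longrightarrow> \<pi> (snd (\<Gamma> \<gamma>) m) = \<gamma> m"
    and t: "t \<in> lifted_prefixes ES \<Gamma> k N"
  shows "inj_on \<pi> (set t)"
proof (rule inj_onI)
  obtain \<gamma> where \<gamma>: "inf_path ES \<gamma>" and t_eq: "t = map (snd (\<Gamma> \<gamma>)) [fst (\<Gamma> \<gamma>)..<N]"
    using t unfolding lifted_prefixes_def by blast
  fix x y assume "x \<in> set t" "y \<in> set t" and \<pi>_eq: "\<pi> x = \<pi> y"
  then obtain a b where ab: "fst (\<Gamma> \<gamma>) \<le> a" "fst (\<Gamma> \<gamma>) \<le> b" "x = snd (\<Gamma> \<gamma>) a" "y = snd (\<Gamma> \<gamma>) b"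
    unfolding t_eq by auto
  have "\<gamma> a = \<gamma> b" using \<pi>_eq lift[OF \<gamma> ab(1)] lift[OF \<gamma> ab(2)] ab(3,4) by simp
  then have "a = b" using \<gamma> unfolding inf_path_from_def by (auto dest: inj_onD)
  then show "x = y" using ab(3,4) by simp
qed

lemma retains_some_lifted_prefixes_mono:
  assumes "retains_some (lifted_prefixes ES \<Gamma> k N') R" and "k \<le> k'" and "N \<le> N'"
  shows "retains_some (lifted_prefixes ES \<Gamma> k' N) R"
  using assms(1)
proof (rule retains_some_mono)
  fix t assume "t \<in> lifted_prefixes ES \<Gamma> k N'"
  then obtain \<gamma> where \<gamma>: "inf_path ES \<gamma>" "fst (\<Gamma> \<gamma>) \<le> k" "to_nat (snd (\<Gamma> \<gamma>) (fst (\<Gamma> \<gamma>))) \<le> k"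
    and t: "t = map (snd (\<Gamma> \<gamma>)) [fst (\<Gamma> \<gamma>)..<N']"
    unfolding lifted_prefixes_def by blast
  have "map (snd (\<Gamma> \<gamma>)) [fst (\<Gamma> \<gamma>)..<N] \<in> lifted_prefixes ES \<Gamma> k' N"
    unfolding lifted_prefixes_def using \<gamma> assms(2) by auto
  moreover have "set (map (snd (\<Gamma> \<gamma>)) [fst (\<Gamma> \<gamma>)..<N]) \<subseteq> set t"
    unfolding t using assms(3) by auto
  ultimately show "\<exists>t'\<in>lifted_prefixes ES \<Gamma> k' N. set t' \<subseteq> set t" by blast
qed

lemma retains_some_lifted_prefixes_if_inf_retained_path:
  assumes lift: "\<And>\<gamma> m. inf_path ES \<gamma> \<Longrightarrow> fst (\<Gamma> \<gamma>) \<le> m \<Longrightarrow> \<pi> (snd (\<Gamma> \<gamma>) m) = \<gamma> m"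
    and "has_inf_retained_path ES Y"
  shows "\<exists>k. \<forall>N. retains_some (lifted_prefixes ES \<Gamma> k N) (Y \<circ> \<pi>)"
proof -
  obtain \<gamma> where \<gamma>: "inf_path ES \<gamma>" "\<And>m. Y (\<gamma> m)"
    using assms(2) unfolding has_inf_retained_path_def by blast
  define k where "k = max (fst (\<Gamma> \<gamma>)) (to_nat (snd (\<Gamma> \<gamma>) (fst (\<Gamma> \<gamma>))))"
  have "map (snd (\<Gamma> \<gamma>)) [fst (\<Gamma> \<gamma>)..<N] \<in> lifted_prefixes ES \<Gamma> k N" for N
    unfolding lifted_prefixes_def k_def using \<gamma>(1) by auto
  moreover have "\<forall>x\<in>set (map (snd (\<Gamma> \<gamma>)) [fst (\<Gamma> \<gamma>)..<N]). (Y \<circ> \<pi>) x" for N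
    using lift[OF \<gamma>(1)] \<gamma>(2) by auto
  ultimately show ?thesis unfolding retains_some_def by blast
qed

lemma has_inf_retained_path_if_retains_lifted_prefixes:
  assumes lf: "\<And>x. finite {y. EL x y}"
    and lift: "\<And>\<gamma>. inf_path ES \<gamma> \<Longrightarrow> inf_path_from EL (fst (\<Gamma> \<gamma>)) (snd (\<Gamma> \<gamma>))"
    and R: "\<And>N. retains_some (lifted_prefixes ES \<Gamma> k N) R"
  shows "has_inf_retained_path EL R"
proof (rule has_inf_retained_pathI_finite_starts[OF lf])
  show "finite {x. to_nat x \<le> k}"
    using finite_vimageI[OF finite_atMost inj_to_nat, of k] by (simp add: vimage_def)
  fix l
  obtain \<gamma> where \<gamma>: "inf_path ES \<gamma>" "fst (\<Gamma> \<gamma>) \<le> k" "to_nat (snd (\<Gamma> \<gamma>) (fst (\<Gamma> \<gamma>))) \<le> k"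
    and retained: "\<forall>x\<in>set (map (snd (\<Gamma> \<gamma>)) [fst (\<Gamma> \<gamma>)..<k + Suc l]). R x"
    using R[of "k + Suc l"] unfolding retains_some_def lifted_prefixes_def by blast
  define f where "f i = snd (\<Gamma> \<gamma>) (fst (\<Gamma> \<gamma>) + i)" for i
  have "inj_on f {..l}"
  proof (rule inj_onI)
    fix i j assume "f i = f j"
    then have "fst (\<Gamma> \<gamma>) + i = fst (\<Gamma> \<gamma>) + j"
      using lift[OF \<gamma>(1)] unfolding inf_path_from_def f_def by (auto dest: inj_onD)
    then show "i = j" by simp
  qed
  moreover have "EL (f i) (f (Suc i))" for i
    using lift[OF \<gamma>(1)] unfolding inf_path_from_def f_def by auto
  moreover have "R (f i)" if "i \<le> l" for i
  proof -
    have "fst (\<Gamma> \<gamma>) + i \<in> set [fst (\<Gamma> \<gamma>)..<k + Suc l]" using \<gamma>(2) that by (simp del: upt_Suc)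
    then show ?thesis using retained unfolding f_def by (simp del: upt_Suc)
  qed
  ultimately have "retained_path EL R l f" unfolding retained_path_def by blast
  moreover have "f 0 \<in> {x. to_nat x \<le> k}" using \<gamma>(3) by (simp add: f_def)
  ultimately show "\<exists>f. retained_path EL R l f \<and> f 0 \<in> {x. to_nat x \<le> k}" by blast
qed

lemma emeasure_site_perc_lifted_le:
  fixes \<pi> :: "'a::countable \<Rightarrow> 'b" and X :: "'c \<Rightarrow> 'a \<Rightarrow> bool"
  assumes p: "\<And>v. 0 \<le> p v \<and> p v \<le> 1" and M: "prob_space M"
    and X_meas: "\<And>x. {\<omega>\<in>space M. X \<omega> x} \<in> sets M"
    and X_indep: "prob_space.indep_vars M (fibre_space \<pi>) (\<lambda>v \<omega>. restrict (X \<omega>) (\<pi> -` {v})) UNIV"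
    and X_prob: "\<And>x. p (\<pi> x) \<le> measure M {\<omega>\<in>space M. X \<omega> x}"
    and lift: "\<And>\<gamma> m. inf_path ES \<gamma> \<Longrightarrow> fst (\<Gamma> \<gamma>) \<le> m \<Longrightarrow> \<pi> (snd (\<Gamma> \<gamma>) m) = \<gamma> m"
  shows "emeasure (site_perc p) {Y\<in>space (site_perc p). \<forall>N. retains_some (lifted_prefixes ES \<Gamma> k N) (Y \<circ> \<pi>)}
       \<le> emeasure M {\<omega>\<in>space M. \<forall>N. retains_some (lifted_prefixes ES \<Gamma> k N) (X \<omega>)}"
proof (rule emeasure_All_antimono_le)
  show "finite_measure (site_perc p)"
    using prob_space_site_perc by (rule prob_space.finite_measure)
  show "finite_measure M" using M by (rule prob_space.finite_measure)
  show "Measurable.pred (site_perc p) (\<lambda>Y. retains_some (lifted_prefixes ES \<Gamma> k N) (Y \<circ> \<pi>))" for N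
    by (rule pred_site_perc_retains_some)
  show "Measurable.pred M (\<lambda>\<omega>. retains_some (lifted_prefixes ES \<Gamma> k N) (X \<omega>))" for N
    using X_meas by (intro pred_retains_some) (simp add: pred_def)
  show "emeasure (site_perc p) {Y\<in>space (site_perc p). retains_some (lifted_prefixes ES \<Gamma> k N) (Y \<circ> \<pi>)}
      \<le> emeasure M {\<omega>\<in>space M. retains_some (lifted_prefixes ES \<Gamma> k N) (X \<omega>)}" for N
    using inj_on_lifted_prefix[where \<Gamma>=\<Gamma>, OF lift]
    by (rule emeasure_site_perc_retains_some_le[OF p M X_meas X_indep X_prob])
qed (auto intro: retains_some_lifted_prefixes_mono)

theorem theorem4p2:
  fixes EL :: "'a::countable \<Rightarrow> 'a \<Rightarrow> bool"
    and ES :: "'b::countable \<Rightarrow> 'b \<Rightarrow> bool"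
    and \<pi> :: "'a \<Rightarrow> 'b"
    and p :: "'b \<Rightarrow> real"
    and M :: "'c measure"
    and X :: "'c \<Rightarrow> 'a \<Rightarrow> bool"
  assumes gL: "simple_lf_graph EL" and gS: "simple_lf_graph ES"
    and surj: "surj \<pi>"
    and lift: "\<exists>\<Gamma> :: (nat \<Rightarrow> 'b) \<Rightarrow> nat \<times> (nat \<Rightarrow> 'a).
       \<Gamma> \<in> measurable (path_space ES) (count_space UNIV \<Otimes>\<^sub>M seq_space) \<and>
       (\<forall>\<gamma>. inf_path ES \<gamma> \<longrightarrow>
          inf_path_from EL (fst (\<Gamma> \<gamma>)) (snd (\<Gamma> \<gamma>)) \<and>
          (\<forall>m\<ge>fst (\<Gamma> \<gamma>). \<pi> (snd (\<Gamma> \<gamma>) m) = \<gamma> m))"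
    and p01: "\<And>v. 0 \<le> p v \<and> p v \<le> 1"
    and M: "prob_space M"
    and Xmeas: "\<And>x. {\<omega> \<in> space M. X \<omega> x} \<in> sets M"
    and Xindep: "prob_space.indep_vars M (\<lambda>v. PiM (\<pi> -` {v}) (\<lambda>_. count_space UNIV))
                   (\<lambda>v \<omega>. restrict (X \<omega>) (\<pi> -` {v})) UNIV"
    and Xprob: "\<And>x. measure M {\<omega> \<in> space M. X \<omega> x} \<ge> p (\<pi> x)"
  shows "measure M {\<omega> \<in> space M. has_inf_retained_path EL (X \<omega>)}
         \<ge> measure (site_perc p) {\<omega> \<in> space (site_perc p). has_inf_retained_path ES \<omega>}"
proof -
  interpret M: prob_space M by (rule M)
  interpret S: prob_space "site_perc p" by (rule prob_space_site_perc)
  obtain \<Gamma> :: "(nat \<Rightarrow> 'b) \<Rightarrow> nat \<times> (nat \<Rightarrow> 'a)"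
    where \<Gamma>: "\<And>\<gamma>. inf_path ES \<gamma> \<Longrightarrow> inf_path_from EL (fst (\<Gamma> \<gamma>)) (snd (\<Gamma> \<gamma>))"
      "\<And>\<gamma> m. inf_path ES \<gamma> \<Longrightarrow> fst (\<Gamma> \<gamma>) \<le> m \<Longrightarrow> \<pi> (snd (\<Gamma> \<gamma>) m) = \<gamma> m"
    using lift by blast
  have lf: "\<And>x. finite {y. EL x y}" using gL by (simp add: simple_lf_graph_def)
  define C where "C k = {Y\<in>space (site_perc p). \<forall>N. retains_some (lifted_prefixes ES \<Gamma> k N) (Y \<circ> \<pi>)}" for k
  define L where "L = {\<omega>\<in>space M. has_inf_retained_path EL (X \<omega>)}"
  have L_sets: "L \<in> sets M"
    using pred_has_inf_retained_path[OF lf, where M=M and R=X] Xmeas by (simp add: L_def pred_def)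
  have "emeasure (site_perc p) {Y\<in>space (site_perc p). has_inf_retained_path ES Y} \<le> emeasure M L"
  proof (rule emeasure_le_if_incseq_cover)
    show "incseq C"
      by (auto simp: incseq_def C_def intro: retains_some_lifted_prefixes_mono)
    show "C k \<in> sets (site_perc p)" for k
      using pred_intros_countable[OF pred_site_perc_retains_some] by (simp add: C_def pred_def)
    show "{Y\<in>space (site_perc p). has_inf_retained_path ES Y} \<subseteq> (\<Union>k. C k)"
      using retains_some_lifted_prefixes_if_inf_retained_path[where \<Gamma>=\<Gamma>, OF \<Gamma>(2)] by (auto simp: C_def)
    fix k
    have "emeasure (site_perc p) (C k) \<le> emeasure M {\<omega>\<in>space M. \<forall>N. retains_some (lifted_prefixes ES \<Gamma> k N) (X \<omega>)}"
      unfolding C_def using Xindep[folded fibre_space_def] Xprob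
      by (intro emeasure_site_perc_lifted_le[where \<Gamma>=\<Gamma>, OF p01 M Xmeas _ _ \<Gamma>(2)]) auto
    also have "\<dots> \<le> emeasure M L"
      using has_inf_retained_path_if_retains_lifted_prefixes[where \<Gamma>=\<Gamma>, OF lf \<Gamma>(1)]
      by (intro emeasure_mono[OF _ L_sets]) (auto simp: L_def)
    finally show "emeasure (site_perc p) (C k) \<le> emeasure M L" .
  qed
  then show ?thesis
    by (simp add: L_def S.emeasure_eq_measure M.emeasure_eq_measure)
qed

end
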